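(* With $g=\delta_{\{0\}}$ on $c_c$, we have $\partial(f+g)(0)=\ell^2$, whereas $\partial f(0)+\partial g(0)=\emptyset$. In particular $\partial(f+g)(0)\neq\partial f(0)+\partial g(0)$, although $0\in\operatorname{core}(\operatorname{dom} f-\operatorname{dom} g)$ and both $f$ and $g$ are convex and lower semicontinuous.
   Context: Let $c_c$ be the space of finitely supported real sequences with the $\ell^2$-norm; its dual is identified with $\ell^2$ via $\langle z,y\rangle=\sum_n z_ny_n$. Let $f\colon c_c\to\mathbb{R}$, $f(x)=\sum_{n=1}^\infty \frac{n^2}{2}(x_n-n^{-2})^2$. For convex $h\colon c_c\to(-\infty,\infty]$ and $x$ with $h(x)<\infty$, $\partial h(x)=\{z\in\ell^2:\forall y\in c_c:\ h(y)\ge h(x)+\langle z,y-x\rangle\}$. $\delta_{\{0\}}$ is the indicator function of $\{0\}$, $\operatorname{dom}h=\{x:h(x)<\infty\}$, and $\operatorname{core}$ denotes the algebraic interior. *)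

theory Defs
  imports "HOL-Analysis.Analysis" "HOL-Library.Extended_Real" "HOL-Library.Liminf_Limsup"
begin

(* Sequences are indexed from 0; index k here corresponds to index n = k+1 in the paper. *)

definition cc :: "(nat \<Rightarrow> real) set" where
  "cc = {x. finite {n. x n \<noteq> 0}}"

definition l2 :: "(nat \<Rightarrow> real) set" where
  "l2 = {z. summable (\<lambda>n. (z n)\<^sup>2)}"

definition l2norm :: "(nat \<Rightarrow> real) \<Rightarrow> real" where
  "l2norm x = sqrt (\<Sum>n. (x n)\<^sup>2)"

definition pairing :: "(nat \<Rightarrow> real) \<Rightarrow> (nat \<Rightarrow> real) \<Rightarrow> real" where
  "pairing z y = (\<Sum>n. z n * y n)"

definition fP :: "(nat \<Rightarrow> real) \<Rightarrow> real" where
  "fP x = (\<Sum>k. (real (k+1))\<^sup>2 / 2 * (x k - 1 / (real (k+1))\<^sup>2)\<^sup>2)"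

definition gP :: "(nat \<Rightarrow> real) \<Rightarrow> ereal" where
  "gP x = (if x = (\<lambda>n. 0) then 0 else \<infinity>)"

definition subdiff :: "((nat \<Rightarrow> real) \<Rightarrow> ereal) \<Rightarrow> (nat \<Rightarrow> real) \<Rightarrow> (nat \<Rightarrow> real) set" where
  "subdiff h x = {z \<in> l2. \<forall>y\<in>cc. h y \<ge> h x + ereal (pairing z (\<lambda>n. y n - x n))}"

definition domE :: "((nat \<Rightarrow> real) \<Rightarrow> ereal) \<Rightarrow> (nat \<Rightarrow> real) set" where
  "domE h = {x \<in> cc. h x < \<infinity>}"

definition core :: "(nat \<Rightarrow> real) set \<Rightarrow> (nat \<Rightarrow> real) set" where
  "core A = {x \<in> A. \<forall>v\<in>cc. \<exists>\<delta>>0. \<forall>t. 0 \<le> t \<and> t \<le> \<delta> \<longrightarrow> (\<lambda>n. x n + t * v n) \<in> A}"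

definition convex_cc :: "((nat \<Rightarrow> real) \<Rightarrow> ereal) \<Rightarrow> bool" where
  "convex_cc h \<longleftrightarrow> (\<forall>x\<in>cc. \<forall>y\<in>cc. \<forall>t::real. 0 \<le> t \<and> t \<le> 1 \<longrightarrow>
      h (\<lambda>n. (1 - t) * x n + t * y n) \<le> ereal (1 - t) * h x + ereal t * h y)"

(* lower semicontinuity on c_c w.r.t. the l2 norm (sequential, equivalent in metric spaces) *)
definition lsc_cc :: "((nat \<Rightarrow> real) \<Rightarrow> ereal) \<Rightarrow> bool" where
  "lsc_cc h \<longleftrightarrow> (\<forall>x\<in>cc. \<forall>s::nat \<Rightarrow> (nat \<Rightarrow> real). (\<forall>k. s k \<in> cc) \<and>
      (\<lambda>k. l2norm (\<lambda>n. s k n - x n)) \<longlonglongrightarrow> 0 \<longrightarrow> h x \<le> liminf (\<lambda>k. h (s k)))"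

end

theory Submission
  imports Defs
begin

text \<open>
  Testing the subgradient inequality of f at 0 along a unit vector e_k with the step
  1/(k+1)^2 forces every coordinate of a subgradient to be at most -1/2, which no
  square-summable sequence satisfies: f has no subgradient at 0, so neither does the sum
  of subdifferentials. On the other hand f + g equals f(0) at 0 and +\<infinity> elsewhere, so
  every element of l2 is a subgradient of f + g at 0. The qualification condition holds
  because f is finite on all of c_c, making dom f - dom g the whole space.
\<close>

lemma cc_eventually_zero:
  assumes "x \<in> cc"
  shows "\<forall>\<^sub>F n in sequentially. x n = 0"
proof -
  from assms obtain m where "\<forall>n\<in>{n. x n \<noteq> 0}. n < m"
    unfolding cc_def finite_nat_set_iff_bounded by blast
  then show ?thesis
    unfolding eventually_sequentially by (metis mem_Collect_eq not_le)
qed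

lemma cc_zero: "(\<lambda>n. 0) \<in> cc"
  unfolding cc_def by simp

lemma cc_single: "(\<lambda>n. if n = k then t else 0) \<in> cc"
  unfolding cc_def by (auto intro: finite_subset[of _ "{k}"])

lemma cc_lincomb:
  assumes "x \<in> cc" "y \<in> cc"
  shows "(\<lambda>n. a * x n + b * y n) \<in> cc"
proof -
  have "{n. a * x n + b * y n \<noteq> 0} \<subseteq> {n. x n \<noteq> 0} \<union> {n. y n \<noteq> 0}"
    by auto
  with assms show ?thesis
    unfolding cc_def by (auto intro: finite_subset)
qed

lemma cc_diff:
  assumes "x \<in> cc" "y \<in> cc"
  shows "(\<lambda>n. x n - y n) \<in> cc"
  using cc_lincomb[OF assms, of 1 "-1"] by simp

lemma core_cc: "core cc = cc"
proof -
  have "(\<lambda>n. x n + t * v n) \<in> cc" if "x \<in> cc" "v \<in> cc" for x v t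
    using cc_lincomb[OF that, of 1 t] by simp
  then show ?thesis
    unfolding core_def by (auto intro: exI[of _ 1])
qed

lemma summable_of_cc:
  fixes f :: "nat \<Rightarrow> real"
  assumes "x \<in> cc" and "\<And>n. x n = 0 \<Longrightarrow> f n = 0"
  shows "summable f"
proof -
  have "\<forall>\<^sub>F n in sequentially. f n = 0"
    using cc_eventually_zero[OF assms(1)] by eventually_elim (use assms(2) in simp)
  then show ?thesis
    using summable_cong[of f "\<lambda>_. 0"] by simp
qed

lemma abs_le_l2norm:
  assumes "summable (\<lambda>n. (x n)\<^sup>2)"
  shows "\<bar>x n\<bar> \<le> l2norm x"
proof -
  have "(x n)\<^sup>2 \<le> (\<Sum>n. (x n)\<^sup>2)"
    using sum_le_suminf[OF assms, of "{n}"] by simp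
  then have "sqrt ((x n)\<^sup>2) \<le> l2norm x"
    unfolding l2norm_def by (rule real_sqrt_le_mono)
  then show ?thesis by simp
qed

lemma tendsto_coordinate_of_l2norm:
  assumes "x \<in> cc" "\<forall>k. s k \<in> cc" "(\<lambda>k. l2norm (\<lambda>n. s k n - x n)) \<longlonglongrightarrow> 0"
  shows "(\<lambda>k. s k n) \<longlonglongrightarrow> x n"
proof -
  have "\<bar>s k n - x n\<bar> \<le> l2norm (\<lambda>n. s k n - x n)" for k
    using assms(1,2) by (intro abs_le_l2norm summable_of_cc[OF cc_diff]) auto
  then have "(\<lambda>k. s k n - x n) \<longlonglongrightarrow> 0"
    by (intro Lim_null_comparison[OF _ assms(3)] always_eventually allI) simp
  then show ?thesis by (rule LIM_zero_cancel)
qed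

lemma pairing_single: "pairing z (\<lambda>n. if n = k then t else 0) = z k * t"
proof -
  have "(\<lambda>n. z n * (if n = k then t else 0)) = (\<lambda>n. if n = k then z k * t else 0)"
    by auto
  then show ?thesis
    unfolding pairing_def using sums_unique[OF sums_single[of k "\<lambda>_. z k * t"]] by simp
qed

definition fP_term :: "(nat \<Rightarrow> real) \<Rightarrow> nat \<Rightarrow> real" where
  "fP_term x k = (real (k+1))\<^sup>2 / 2 * (x k - 1 / (real (k+1))\<^sup>2)\<^sup>2"

lemma fP_eq_suminf: "fP x = (\<Sum>k. fP_term x k)"
  unfolding fP_def fP_term_def by simp

lemma fP_term_nonneg: "0 \<le> fP_term x k"
  unfolding fP_term_def by simp

lemma fP_term_expand:
  "fP_term x k = (real (k+1))\<^sup>2 / 2 * (x k)\<^sup>2 - x k + 1 / (2 * (real (k+1))\<^sup>2)"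
proof -
  have "m\<^sup>2 / 2 * (a - 1 / m\<^sup>2)\<^sup>2 = m\<^sup>2 / 2 * a\<^sup>2 - a + 1 / (2 * m\<^sup>2)" if "m \<noteq> 0" for m a :: real
    using that by (simp add: power2_eq_square field_simps)
  from this[of "real (k+1)" "x k"] show ?thesis
    unfolding fP_term_def by simp
qed

lemma summable_fP_term_zero: "summable (fP_term (\<lambda>n. 0))"
proof -
  have "summable (\<lambda>k. 1 / (real (k+1))\<^sup>2 / 2)"
    using summable_divide[OF sums_summable[OF inverse_squares_sums], of 2] by (simp add: add.commute)
  moreover have "fP_term (\<lambda>n. 0) = (\<lambda>k. 1 / (real (k+1))\<^sup>2 / 2)"
    by (simp add: fun_eq_iff fP_term_expand)
  ultimately show ?thesis
    by simp
qed

lemma summable_fP_term: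
  assumes "x \<in> cc"
  shows "summable (fP_term x)"
proof -
  have "summable (\<lambda>k. fP_term x k - fP_term (\<lambda>n. 0) k)"
    using assms by (rule summable_of_cc) (simp add: fP_term_expand)
  from summable_add[OF this summable_fP_term_zero] show ?thesis
    by simp
qed

lemma fP_single_minus_fP_zero:
  "fP (\<lambda>n. if n = k then t else 0) - fP (\<lambda>n. 0) = (real (k+1))\<^sup>2 / 2 * t\<^sup>2 - t"
proof -
  let ?y = "\<lambda>n. if n = k then t else 0"
  have "fP ?y - fP (\<lambda>n. 0) = (\<Sum>n. fP_term ?y n - fP_term (\<lambda>n. 0) n)"
    unfolding fP_eq_suminf
    using suminf_diff[OF summable_fP_term[OF cc_single] summable_fP_term_zero] by simp
  also have "(\<lambda>n. fP_term ?y n - fP_term (\<lambda>n. 0) n)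
      = (\<lambda>n. if n = k then (real (k+1))\<^sup>2 / 2 * t\<^sup>2 - t else 0)"
    by (auto simp: fP_term_expand)
  also have "(\<Sum>n. \<dots> n) = (real (k+1))\<^sup>2 / 2 * t\<^sup>2 - t"
    by (rule sums_unique[symmetric, OF sums_single])
  finally show ?thesis .
qed

lemma subdiff_fP_zero_le:
  assumes "z \<in> subdiff (\<lambda>x. ereal (fP x)) (\<lambda>n. 0)"
  shows "z k \<le> -1/2"
proof -
  define m where "m = real (k+1)"
  define c where "c = 1 / m\<^sup>2" \<comment> \<open>the minimiser of m^2/2 t^2 - t\<close>
  have "m > 0" "c > 0" unfolding c_def m_def by simp_all
  have "fP (\<lambda>n. 0) + pairing z (\<lambda>n. if n = k then c else 0) \<le> fP (\<lambda>n. if n = k then c else 0)"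
    using assms cc_single[of k c] unfolding subdiff_def by auto
  then have "z k * c \<le> m\<^sup>2 / 2 * c\<^sup>2 - c"
    using fP_single_minus_fP_zero[of k c] by (simp add: pairing_single m_def)
  also have "\<dots> = (-1/2) * c"
    unfolding c_def using \<open>m > 0\<close> by (simp add: power2_eq_square field_simps)
  finally show ?thesis
    using \<open>c > 0\<close> by (rule mult_right_le_imp_le)
qed

lemma subdiff_fP_zero: "subdiff (\<lambda>x. ereal (fP x)) (\<lambda>n. 0) = {}"
proof (rule equals0I)
  fix z assume z: "z \<in> subdiff (\<lambda>x. ereal (fP x)) (\<lambda>n. 0)"
  have "(1/2)\<^sup>2 \<le> (- z k)\<^sup>2" for k
    using subdiff_fP_zero_le[OF z, of k] by (intro power_mono) auto
  then have "1/4 \<le> (z k)\<^sup>2" for k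
    by (simp add: power2_eq_square)
  moreover have "(\<lambda>k. (z k)\<^sup>2) \<longlonglongrightarrow> 0"
    using z unfolding subdiff_def l2_def by (intro summable_LIMSEQ_zero) simp
  ultimately have "(1/4::real) \<le> 0"
    using LIMSEQ_le_const by blast
  then show False by simp
qed

lemma convex_comb_square_le:
  fixes a b t :: real
  assumes "0 \<le> t" "t \<le> 1"
  shows "((1-t)*a + t*b)\<^sup>2 \<le> (1-t)*a\<^sup>2 + t*b\<^sup>2"
proof -
  have "(1-t)*a\<^sup>2 + t*b\<^sup>2 - ((1-t)*a + t*b)\<^sup>2 = t*(1-t)*(a-b)\<^sup>2"
    by (simp add: power2_eq_square algebra_simps)
  moreover have "0 \<le> t*(1-t)*(a-b)\<^sup>2"
    using assms by simp
  ultimately show ?thesis by linarith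
qed

lemma fP_term_convex:
  assumes "0 \<le> t" "t \<le> 1"
  shows "fP_term (\<lambda>n. (1-t) * x n + t * y n) k \<le> (1-t) * fP_term x k + t * fP_term y k"
proof -
  have "w * ((1-t) * a + t * b - c)\<^sup>2 \<le> (1-t) * (w * (a - c)\<^sup>2) + t * (w * (b - c)\<^sup>2)"
    if "0 \<le> w" for w a b c :: real
  proof -
    have "w * ((1-t) * a + t * b - c)\<^sup>2 = w * ((1-t) * (a - c) + t * (b - c))\<^sup>2"
      by (simp add: algebra_simps)
    also have "\<dots> \<le> w * ((1-t) * (a - c)\<^sup>2 + t * (b - c)\<^sup>2)"
      using convex_comb_square_le[OF assms] that by (rule mult_left_mono)
    also have "\<dots> = (1-t) * (w * (a - c)\<^sup>2) + t * (w * (b - c)\<^sup>2)"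
      by (simp add: algebra_simps)
    finally show ?thesis .
  qed
  then show ?thesis
    unfolding fP_term_def by simp
qed

lemma convex_cc_fP: "convex_cc (\<lambda>x. ereal (fP x))"
  unfolding convex_cc_def
proof (intro ballI allI impI)
  fix x y and t :: real
  assume x: "x \<in> cc" and y: "y \<in> cc" and t: "0 \<le> t \<and> t \<le> 1"
  have sx: "summable (\<lambda>k. (1-t) * fP_term x k)" and sy: "summable (\<lambda>k. t * fP_term y k)"
    using summable_fP_term[OF x] summable_fP_term[OF y] by (auto intro: summable_mult)
  have "fP (\<lambda>n. (1-t) * x n + t * y n) \<le> (\<Sum>k. (1-t) * fP_term x k + t * fP_term y k)"
    unfolding fP_eq_suminf using t
    by (intro suminf_le summable_fP_term cc_lincomb x y summable_add sx sy fP_term_convex) auto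
  also have "\<dots> = (1-t) * fP x + t * fP y"
    unfolding fP_eq_suminf
    using suminf_add[OF sx sy] suminf_mult[OF summable_fP_term[OF x]]
      suminf_mult[OF summable_fP_term[OF y]] by simp
  finally show "ereal (fP (\<lambda>n. (1-t) * x n + t * y n)) \<le> ereal (1-t) * ereal (fP x) + ereal t * ereal (fP y)"
    by simp
qed

text \<open>Each partial sum of f is continuous along coordinatewise convergence and bounds f from below.\<close>

lemma lsc_cc_fP: "lsc_cc (\<lambda>x. ereal (fP x))"
  unfolding lsc_cc_def
proof (intro ballI allI impI)
  fix x and s :: "nat \<Rightarrow> nat \<Rightarrow> real"
  assume x: "x \<in> cc" and s: "(\<forall>k. s k \<in> cc) \<and> (\<lambda>k. l2norm (\<lambda>n. s k n - x n)) \<longlonglongrightarrow> 0"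
  have partial_le: "ereal (\<Sum>n<N. fP_term x n) \<le> liminf (\<lambda>k. ereal (fP (s k)))" for N
  proof -
    have "(\<lambda>k. fP_term (s k) n) \<longlonglongrightarrow> fP_term x n" for n
      unfolding fP_term_def using tendsto_coordinate_of_l2norm[OF x] s
      by (intro tendsto_intros) auto
    then have "(\<lambda>k. ereal (\<Sum>n<N. fP_term (s k) n)) \<longlonglongrightarrow> ereal (\<Sum>n<N. fP_term x n)"
      by (intro tendsto_ereal tendsto_sum) auto
    then have "ereal (\<Sum>n<N. fP_term x n) = liminf (\<lambda>k. ereal (\<Sum>n<N. fP_term (s k) n))"
      by (intro lim_imp_Liminf[symmetric]) auto
    also have "\<dots> \<le> liminf (\<lambda>k. ereal (fP (s k)))"
    proof (intro Liminf_mono always_eventually allI)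
      show "ereal (\<Sum>n<N. fP_term (s k) n) \<le> ereal (fP (s k))" for k
        unfolding fP_eq_suminf using s by (simp add: sum_le_suminf summable_fP_term fP_term_nonneg)
    qed
    finally show ?thesis .
  qed
  have "(\<lambda>N. ereal (\<Sum>n<N. fP_term x n)) \<longlonglongrightarrow> ereal (fP x)"
    unfolding fP_eq_suminf by (intro tendsto_ereal summable_LIMSEQ summable_fP_term x)
  then show "ereal (fP x) \<le> liminf (\<lambda>k. ereal (fP (s k)))"
    by (rule LIMSEQ_le_const2) (use partial_le in auto)
qed

lemma gP_nonneg: "0 \<le> gP x"
  unfolding gP_def by simp

lemma convex_cc_gP: "convex_cc gP"
  unfolding convex_cc_def
proof (intro ballI allI impI)
  fix x y and t :: real
  assume t: "0 \<le> t \<and> t \<le> 1"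
  let ?z = "\<lambda>n::nat. (1-t) * x n + t * y n"
  show "gP ?z \<le> ereal (1-t) * gP x + ereal t * gP y"
  proof (cases "?z = (\<lambda>n. 0)")
    case True
    have "0 \<le> ereal (1-t) * gP x + ereal t * gP y"
      using t gP_nonneg[of x] gP_nonneg[of y]
      by (intro add_nonneg_nonneg) (simp_all add: ereal_zero_le_0_iff)
    with True show ?thesis by (simp add: gP_def)
  next
    case False
    consider "t = 0" "x \<noteq> (\<lambda>n. 0)" | "t = 1" "y \<noteq> (\<lambda>n. 0)"
      | "0 < t" "t < 1" "x \<noteq> (\<lambda>n. 0) \<or> y \<noteq> (\<lambda>n. 0)"
      using t False by fastforce
    then have "ereal (1-t) * gP x + ereal t * gP y = \<infinity>"
      by cases (auto simp: gP_def)
    then show ?thesis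
      by (simp only: ereal_less_eq(1))
  qed
qed

lemma lsc_cc_gP: "lsc_cc gP"
  unfolding lsc_cc_def
proof (intro ballI allI impI)
  fix x and s :: "nat \<Rightarrow> nat \<Rightarrow> real"
  assume x: "x \<in> cc" and s: "(\<forall>k. s k \<in> cc) \<and> (\<lambda>k. l2norm (\<lambda>n. s k n - x n)) \<longlonglongrightarrow> 0"
  show "gP x \<le> liminf (\<lambda>k. gP (s k))"
  proof (cases "x = (\<lambda>n. 0)")
    case True
    have "0 \<le> liminf (\<lambda>k. gP (s k))"
      by (intro Liminf_bounded always_eventually allI gP_nonneg)
    with True show ?thesis by (simp add: gP_def)
  next
    case False
    then obtain n where "x n \<noteq> 0" by auto
    moreover have "(\<lambda>k. s k n) \<longlonglongrightarrow> x n"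
      using tendsto_coordinate_of_l2norm[OF x] s by blast
    ultimately have "\<forall>\<^sub>F k in sequentially. s k n \<noteq> 0"
      by (intro tendsto_imp_eventually_ne) auto
    then have "\<forall>\<^sub>F k in sequentially. gP (s k) = \<infinity>"
      by eventually_elim (auto simp: gP_def)
    then have "liminf (\<lambda>k. gP (s k)) = liminf (\<lambda>k. \<infinity>)"
      by (rule Liminf_eq)
    then have "liminf (\<lambda>k. gP (s k)) = \<infinity>"
      by (simp add: Liminf_const)
    then show ?thesis by simp
  qed
qed

lemma domE_ereal: "domE (\<lambda>x. ereal (h x)) = cc"
  unfolding domE_def by simp

lemma domE_gP: "domE gP = {\<lambda>n. 0}"
  unfolding domE_def gP_def using cc_zero by auto

lemma subdiff_add_gP_zero: "subdiff (\<lambda>x. ereal (h x) + gP x) (\<lambda>n. 0) = l2"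
proof -
  have "ereal (h (\<lambda>n. 0)) + ereal (pairing z (\<lambda>n. y n - 0)) \<le> ereal (h y) + gP y" for z y
  proof (cases "y = (\<lambda>n. 0)")
    case True
    then show ?thesis by (simp add: gP_def pairing_def)
  qed (simp add: gP_def)
  then show ?thesis
    unfolding subdiff_def by (auto simp: gP_def)
qed

lemma l2_nonempty: "l2 \<noteq> {}"
proof -
  have "(\<lambda>n. 0) \<in> l2"
    unfolding l2_def by simp
  then show ?thesis by blast
qed

theorem mainTheorem7:
  shows "subdiff (\<lambda>x. ereal (fP x) + gP x) (\<lambda>n. 0) = l2
    \<and> {(\<lambda>n. a n + b n) | a b. a \<in> subdiff (\<lambda>x. ereal (fP x)) (\<lambda>n. 0) \<and> b \<in> subdiff gP (\<lambda>n. 0)} = {}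
    \<and> subdiff (\<lambda>x. ereal (fP x) + gP x) (\<lambda>n. 0)
        \<noteq> {(\<lambda>n. a n + b n) | a b. a \<in> subdiff (\<lambda>x. ereal (fP x)) (\<lambda>n. 0) \<and> b \<in> subdiff gP (\<lambda>n. 0)}
    \<and> (\<lambda>n. 0) \<in> core {(\<lambda>n. a n - b n) | a b. a \<in> domE (\<lambda>x. ereal (fP x)) \<and> b \<in> domE gP}
    \<and> convex_cc (\<lambda>x. ereal (fP x)) \<and> convex_cc gP
    \<and> lsc_cc (\<lambda>x. ereal (fP x)) \<and> lsc_cc gP"
proof -
  have sum_empty: "{(\<lambda>n. a n + b n) | a b. a \<in> subdiff (\<lambda>x. ereal (fP x)) (\<lambda>n. 0)
      \<and> b \<in> subdiff gP (\<lambda>n. 0)} = {}"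
    by (simp add: subdiff_fP_zero)
  have "{(\<lambda>n. a n - b n) | a b. a \<in> domE (\<lambda>x. ereal (fP x)) \<and> b \<in> domE gP} = cc"
    by (auto simp: domE_ereal domE_gP)
  then have "(\<lambda>n. 0) \<in> core {(\<lambda>n. a n - b n) | a b. a \<in> domE (\<lambda>x. ereal (fP x)) \<and> b \<in> domE gP}"
    by (simp add: core_cc cc_zero)
  then show ?thesis
    using subdiff_add_gP_zero sum_empty l2_nonempty
      convex_cc_fP convex_cc_gP lsc_cc_fP lsc_cc_gP by auto
qed

end
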